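(* Let $V$ be a vertex algebra and $M$ a subspace of $V$ with $\mathbf{1}\in M$. Then $M$ is an $MZ_{0,-1}$-subspace of $V$ if and only if $M=V$.
   Context: A vertex algebra $(V,Y,\mathbf{1})$ is over $\mathbb{C}$ with vacuum $\mathbf{1}$; for $u\in V$ write $Y(u,z)=\sum_{n\in\mathbb{Z}}u_nz^{-n-1}$ with $u_n\in\operatorname{End}V$. Iterated products are nested to the right: $v_{n_1}\cdots v_{n_t}v=v_{n_1}(\cdots(v_{n_t}v))$. For a subspace $M\subseteq V$: $r_{0,-1}(M)$ is the set of $v\in V$ for which there is $m\ge 0$ with $v_{n_1}\cdots v_{n_t}v\in M$ for all $t\ge m$ and all $n_1,\dots,n_t\in\{0,-1\}$. $lsr_{0,-1}(M)$ is the set of $v\in V$ such that for every $b\in V$ there is $m\ge0$ with $b_sv_{n_1}\cdots v_{n_t}v\in M$ for all $t\ge m$ and all $s,n_1,\dots,n_t\in\{0,-1\}$. $rsr_{0,-1}(M)$ is the set of $v\in V$ such that for every $w\in V$ there is $m\ge 0$ with $(v_{n_1}\cdots v_{n_t}v)_nw\in M$ for all $t\ge m$ and all $n,n_1,\dots,n_t\in\{0,-1\}$. $sr_{0,-1}(M)=lsr_{0,-1}(M)\cap rsr_{0,-1}(M)$. $M$ is an $MZ_{0,-1}$-subspace of $V$ if $r_{0,-1}(M)=sr_{0,-1}(M)$. *)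

theory Defs
  imports Complex_Main
begin

text \<open>In a vertex algebra all
sums occurring in the Borcherds (Jacobi) identity are finitely supported by the
truncation axiom, so this is the usual sum.\<close>
definition fsum :: "(nat \<Rightarrow> 'v::ab_group_add) \<Rightarrow> 'v" where
  "fsum f = (\<Sum>i\<in>{i. f i \<noteq> 0}. f i)"

text \<open>A vertex algebra over the complex numbers: a complex vector space (scalar multiplication
  scale), the products Y u n v = u_n v (n an integer), and the vacuum vac.\<close>
locale vertex_algebra = vector_space scale
  for scale :: "complex \<Rightarrow> 'v::ab_group_add \<Rightarrow> 'v" +
  fixes Y :: "'v \<Rightarrow> int \<Rightarrow> 'v \<Rightarrow> 'v"
    and vac :: 'v
  assumes lin_right: "\<And>u n. Vector_Spaces.linear scale scale (Y u n)"
    and lin_left: "\<And>n v. Vector_Spaces.linear scale scale (\<lambda>u. Y u n v)"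
    and truncation: "\<And>u v. \<exists>N. \<forall>n\<ge>N. Y u n v = 0"
    and vacuum: "\<And>n v. Y vac n v = (if n = -1 then v else 0)"
    and creation1: "\<And>u. Y u (-1) vac = u"
    and creation2: "\<And>u n. n \<ge> 0 \<Longrightarrow> Y u n vac = 0"
    and borcherds: "\<And>u v w m n k.
      fsum (\<lambda>i. scale ((of_int m) gchoose i) (Y (Y u (k + int i) v) (m + n - int i) w))
      = fsum (\<lambda>i. scale ((-1) ^ i * ((of_int k) gchoose i)) (Y u (m + k - int i) (Y v (n + int i) w)))
        - fsum (\<lambda>i. scale ((-1) ^ i * ((of_int k) gchoose i) * ((-1) powi k))
                     (Y v (n + k - int i) (Y u (m + int i) w)))"

definition iter :: "('v \<Rightarrow> int \<Rightarrow> 'v \<Rightarrow> 'v) \<Rightarrow> 'v \<Rightarrow> int list \<Rightarrow> 'v" where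
  "iter Y v ns = foldr (\<lambda>n w. Y v n w) ns v"

definition r01 :: "('v \<Rightarrow> int \<Rightarrow> 'v \<Rightarrow> 'v) \<Rightarrow> 'v set \<Rightarrow> 'v set" where
  "r01 Y M = {v. \<exists>m::nat. \<forall>ns. length ns \<ge> m \<and> set ns \<subseteq> {0, -1} \<longrightarrow> iter Y v ns \<in> M}"

definition lsr01 :: "('v \<Rightarrow> int \<Rightarrow> 'v \<Rightarrow> 'v) \<Rightarrow> 'v set \<Rightarrow> 'v set" where
  "lsr01 Y M = {v. \<forall>b. \<exists>m::nat. \<forall>s ns. s \<in> {0, -1} \<and> length ns \<ge> m \<and> set ns \<subseteq> {0, -1}
                    \<longrightarrow> Y b s (iter Y v ns) \<in> M}"

definition rsr01 :: "('v \<Rightarrow> int \<Rightarrow> 'v \<Rightarrow> 'v) \<Rightarrow> 'v set \<Rightarrow> 'v set" where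
  "rsr01 Y M = {v. \<forall>w. \<exists>m::nat. \<forall>n ns. n \<in> {0, -1} \<and> length ns \<ge> m \<and> set ns \<subseteq> {0, -1}
                    \<longrightarrow> Y (iter Y v ns) n w \<in> M}"

definition sr01 :: "('v \<Rightarrow> int \<Rightarrow> 'v \<Rightarrow> 'v) \<Rightarrow> 'v set \<Rightarrow> 'v set" where
  "sr01 Y M = lsr01 Y M \<inter> rsr01 Y M"

definition MZ01_subspace :: "('v \<Rightarrow> int \<Rightarrow> 'v \<Rightarrow> 'v) \<Rightarrow> 'v set \<Rightarrow> bool" where
  "MZ01_subspace Y M \<longleftrightarrow> r01 Y M = sr01 Y M"

end

theory Submission
  imports Defs
begin

text \<open>Since \<open>vac\<^sub>n\<close> is the identity for \<open>n = -1\<close> and zero otherwise, every iterated product of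
  the vacuum with itself is \<open>vac\<close> or \<open>0\<close>; hence \<open>vac \<in> r\<^sub>0\<^sub>,\<^sub>-\<^sub>1(M)\<close> as soon as \<open>vac, 0 \<in> M\<close>.
  If \<open>vac\<close> were also in \<open>rsr\<^sub>0\<^sub>,\<^sub>-\<^sub>1(M)\<close>, then for any \<open>w\<close> the element
  \<open>(vac\<^sub>-\<^sub>1 \<cdots> vac\<^sub>-\<^sub>1 vac)\<^sub>-\<^sub>1 w = vac\<^sub>-\<^sub>1 w = w\<close> would lie in \<open>M\<close>, so \<open>M = V\<close>.\<close>

lemma MZ01_subspace_UNIV: "MZ01_subspace Y UNIV"
  by (simp add: MZ01_subspace_def sr01_def r01_def lsr01_def rsr01_def)

context vertex_algebra
begin

lemma iter_vac: "iter Y vac ns \<in> {vac, 0}"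
  by (induction ns) (auto simp: iter_def vacuum)

lemma iter_vac_replicate_minus_one: "iter Y vac (replicate k (-1)) = vac"
  by (induction k) (simp_all add: iter_def vacuum)

lemma vac_in_r01:
  assumes "vac \<in> M" and "0 \<in> M"
  shows "vac \<in> r01 Y M"
proof -
  have "iter Y vac ns \<in> M" for ns
    using iter_vac[of ns] assms by auto
  then show ?thesis
    unfolding r01_def by blast
qed

lemma vac_in_rsr01_imp_UNIV:
  assumes "vac \<in> rsr01 Y M"
  shows "M = UNIV"
proof -
  have "w \<in> M" for w
  proof -
    obtain m :: nat where
      m: "\<forall>n ns. n \<in> {0, -1} \<and> length ns \<ge> m \<and> set ns \<subseteq> {0, -1} \<longrightarrow> Y (iter Y vac ns) n w \<in> M"
      using assms unfolding rsr01_def by blast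
    have "Y (iter Y vac (replicate m (-1))) (-1) w \<in> M"
      by (rule m[rule_format, of "-1" "replicate m (-1)"]) auto
    then show ?thesis
      by (simp add: iter_vac_replicate_minus_one vacuum)
  qed
  then show ?thesis by blast
qed

end

theorem mainTheorem5:
  fixes scale :: "complex \<Rightarrow> 'v::ab_group_add \<Rightarrow> 'v"
    and Y :: "'v \<Rightarrow> int \<Rightarrow> 'v \<Rightarrow> 'v" and vac :: 'v and M :: "'v set"
  assumes "vertex_algebra scale Y vac"
    and "module.subspace scale M"
    and "vac \<in> M"
  shows "MZ01_subspace Y M \<longleftrightarrow> M = UNIV"
proof
  interpret vertex_algebra scale Y vac by fact
  assume "MZ01_subspace Y M"
  moreover have "vac \<in> r01 Y M"
    using vac_in_r01 assms(3) subspace_0[OF assms(2)] .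
  ultimately have "vac \<in> rsr01 Y M"
    by (simp add: MZ01_subspace_def sr01_def)
  then show "M = UNIV"
    by (rule vac_in_rsr01_imp_UNIV)
next
  assume "M = UNIV"
  then show "MZ01_subspace Y M"
    by (simp add: MZ01_subspace_UNIV)
qed

end
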